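(* Let $Z$ be the twistor space of $\mathbb H^4$ and let $\mathbb Z_2^3$ act on $\mathbb H^4$ (ball model, coordinates $x_1,\dots,x_4$ centred at a point $p$) by the maps $(x_1,x_2,x_3,x_4)\mapsto(\pm x_1,\pm x_2,\pm x_3,\pm x_4)$ with an even number of sign changes; let $\mathbb Z_2^3$ act on $Z$ by the induced action. For $i\neq j$ let $\Pi_{ij}\subset\mathbb H^4$ be the totally geodesic coordinate $2$-plane in the $(x_i,x_j)$ directions; each $\Pi_{ij}$ has two twistor lifts to $Z$, giving twelve surfaces in $Z$. Then the points of $Z$ with non-trivial stabilizer are of two types: (1) there are exactly $6$ points with stabilizer $\mathbb Z_2^2$; they lie on the twistor fibre $t^{-1}(p)$ over $p$, arranged as the vertices of an octahedron, and each pair of opposite vertices forms an orbit of the $\mathbb Z_2^3$-action; (2) the remaining points with non-trivial stabilizer have stabilizer $\mathbb Z_2$; they form the union of the fibre $t^{-1}(p)$ and the twelve lifted surfaces, with the six points of (1) removed.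
   Context: The twistor space of $\mathbb H^4$ (with a fixed orientation) is $Z=\mathrm{SO}_0(4,1)/\mathrm U(2)$, the coadjoint orbit of $\mathrm{SO}_0(4,1)$ through an element $\begin{pmatrix}0&0\\0&J_0\end{pmatrix}$ with $J_0\in\mathfrak{so}(4)$, $J_0^2=-1$. The natural fibration $t\colon Z\to \mathrm{SO}_0(4,1)/\mathrm{SO}(4)=\mathbb H^4$ identifies the fibre $t^{-1}(q)\cong S^2$ with the set of linear complex structures on $T_q\mathbb H^4$ orthogonal for the hyperbolic metric and inducing the given orientation. An isometry of $\mathbb H^4$ preserving orientation acts on $Z$ naturally. The twistor lift of an oriented totally geodesic plane $\Pi\subset\mathbb H^4$ is the surface $\{J\in t^{-1}(q): q\in\Pi,\ T_q\Pi \text{ is a } J\text{-complex line, with orientation induced by } J \text{ agreeing with that of } \Pi\}$; the two orientations of $\Pi$ give two disjoint lifts. *)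

theory Defs
  imports "HOL-Analysis.Analysis"
begin

text \<open>Ball model of hyperbolic 4-space, centred at p = 0; points are q :: real^4 with norm q < 1.
  Tangent spaces are identified with real^4; linear endomorphisms with real^4^4.\<close>

definition hyp_ball :: "(real^4) set" where
  "hyp_ball = {q. norm q < 1}"

definition hyp_metric :: "real^4 \<Rightarrow> real^4 \<Rightarrow> real^4 \<Rightarrow> real" where
  "hyp_metric q u v = 4 / (1 - (norm q)\<^sup>2)\<^sup>2 * (u \<bullet> v)"

definition cols4 :: "real^4 \<Rightarrow> real^4 \<Rightarrow> real^4 \<Rightarrow> real^4 \<Rightarrow> real^4^4" where
  "cols4 a b c d = (\<chi> i j. (if j = 1 then a else if j = 2 then b else if j = 3 then c else d) $ i)"

text \<open>J induces the standard orientation: some (equivalently every) complex basis (v, Jv, w, Jw)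
  is positively oriented.\<close>
definition induces_orientation :: "real^4^4 \<Rightarrow> bool" where
  "induces_orientation J \<longleftrightarrow> (\<exists>v w. det (cols4 v (J *v v) w (J *v w)) > 0)"

definition twistor_at :: "real^4 \<Rightarrow> real^4^4 \<Rightarrow> bool" where
  "twistor_at q J \<longleftrightarrow> J ** J = - mat 1
     \<and> (\<forall>u v. hyp_metric q (J *v u) (J *v v) = hyp_metric q u v)
     \<and> induces_orientation J"

definition twistor_space :: "((real^4) \<times> (real^4^4)) set" where
  "twistor_space = {(q, J). q \<in> hyp_ball \<and> twistor_at q J}"

definition twistor_proj :: "(real^4) \<times> (real^4^4) \<Rightarrow> real^4" where
  "twistor_proj z = fst z"

definition twistor_fibre :: "real^4 \<Rightarrow> ((real^4) \<times> (real^4^4)) set" where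
  "twistor_fibre q = {z \<in> twistor_space. twistor_proj z = q}"

definition sign_group :: "(real^4^4) set" where
  "sign_group = {D. \<exists>s :: 4 \<Rightarrow> real. (\<forall>i. s i = 1 \<or> s i = -1)
       \<and> even (card {i. s i = -1}) \<and> D = (\<chi> i j. if i = j then s i else 0)}"

text \<open>Induced action of an isometry fixing p (with differential D) on Z.\<close>
definition twistor_act :: "real^4^4 \<Rightarrow> (real^4) \<times> (real^4^4) \<Rightarrow> (real^4) \<times> (real^4^4)" where
  "twistor_act D z = (D *v fst z, D ** snd z ** matrix_inv D)"

definition stabilizer :: "(real^4) \<times> (real^4^4) \<Rightarrow> (real^4^4) set" where
  "stabilizer z = {D \<in> sign_group. twistor_act D z = z}"

definition orbit :: "(real^4) \<times> (real^4^4) \<Rightarrow> ((real^4) \<times> (real^4^4)) set" where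
  "orbit z = {twistor_act D z | D. D \<in> sign_group}"

text \<open>Totally geodesic plane through p spanned by orthonormal u, v (a flat disc in the ball model).\<close>
definition geod_plane :: "real^4 \<Rightarrow> real^4 \<Rightarrow> (real^4) set" where
  "geod_plane u v = hyp_ball \<inter> span {u, v}"

text \<open>Twistor lift of the plane through p spanned by orthonormal u, v, oriented by (u, v):
  the tangent plane span{u,v} is a J-complex line, and the orientation (u, Ju) induced by J
  agrees with (u, v).\<close>
definition twistor_lift :: "real^4 \<Rightarrow> real^4 \<Rightarrow> ((real^4) \<times> (real^4^4)) set" where
  "twistor_lift u v = {(q, J) \<in> twistor_space. q \<in> geod_plane u v
      \<and> J *v u \<in> span {u, v} \<and> J *v v \<in> span {u, v} \<and> (J *v u) \<bullet> v > 0}"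

text \<open>The twelve lifted surfaces: coordinate planes Pi_ij with both orientations.\<close>
definition twelve_surfaces :: "((real^4) \<times> (real^4^4)) set" where
  "twelve_surfaces = (\<Union>i j. if i \<noteq> j then twistor_lift (axis i 1) (axis j 1) else {})"

end

theory Submission
  imports Defs
begin

text \<open>The sign changes with an even number of minus signs are the matrices
  \<open>diag (flip_signs I)\<close> with \<open>card I\<close> even, and such a matrix fixes \<open>(q, J)\<close> iff \<open>q\<close>
  vanishes on the coordinates in \<open>I\<close> and \<open>J\<close> preserves the splitting of \<open>\<real>\<^sup>4\<close> into the
  coordinate subspaces for \<open>I\<close> and \<open>- I\<close>. Besides the identity there is \<open>-1\<close>, which fixes
  exactly the fibre over \<open>p = 0\<close>, and the reflections in the six coordinate planes: the one
  with \<open>I = - {i, j}\<close> fixes \<open>(q, J)\<close> iff \<open>q \<in> \<Pi>\<^sub>i\<^sub>j\<close> and \<open>J\<close> preserves the tangent plane of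
  \<open>\<Pi>\<^sub>i\<^sub>j\<close>, i.e. iff \<open>(q, J)\<close> lies on a twistor lift of \<open>\<Pi>\<^sub>i\<^sub>j\<close>. An orthogonal complex structure
  preserving a splitting into two coordinate planes rotates both planes; the orientation
  forces the rotations to be compatible, which leaves only \<open>\<plusminus>i, \<plusminus>j, \<plusminus>k\<close> (left multiplication by
  unit quaternions), one pair for each of the three splittings. Hence the stabiliser has order 4
  exactly at the six points \<open>(0, \<plusminus>i), (0, \<plusminus>j), (0, \<plusminus>k)\<close> and order 2 at the other points of
  the fibre over \<open>p\<close> and of the twelve lifted surfaces.\<close>

definition diag :: "('n \<Rightarrow> real) \<Rightarrow> real^'n^'n" where
  "diag s = (\<chi> i j. if i = j then s i else 0)"

definition flip_signs :: "'n set \<Rightarrow> 'n \<Rightarrow> real" where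
  "flip_signs I k = (if k \<in> I then -1 else 1)"

definition block_diagonal :: "'n set \<Rightarrow> real^'n^'n \<Rightarrow> bool" where
  "block_diagonal I A \<longleftrightarrow> (\<forall>k l. (k \<in> I) \<noteq> (l \<in> I) \<longrightarrow> A$k$l = 0)"

lemma diag_mult_vec: "diag s *v x = (\<chi> i. s i * x$i)"
  by (simp add: diag_def vec_eq_iff matrix_vector_mult_def if_distrib[where f = "\<lambda>a. a * _"] cong: if_cong)

lemma diag_conj: "diag s ** A ** diag t = (\<chi> i j. s i * A$i$j * t j)"
  by (simp add: diag_def vec_eq_iff matrix_matrix_mult_def
      if_distrib[where f = "\<lambda>a. a * _"] if_distrib[where f = "\<lambda>a. _ * a"] cong: if_cong)

lemma inj_diag: "inj diag"
proof
  fix s t :: "'n::finite \<Rightarrow> real" assume "diag s = diag t"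
  then have "diag s $ i $ i = diag t $ i $ i" for i by simp
  then show "s = t" by (simp add: diag_def fun_eq_iff)
qed

lemma inj_flip_signs: "inj flip_signs"
proof
  fix I K :: "'n set" assume "flip_signs I = flip_signs K"
  then have "flip_signs I k = flip_signs K k" for k by simp
  then show "I = K" unfolding flip_signs_def by (metis equalityI subsetI one_neq_neg_one)
qed

lemma inj_diag_flip_signs: "inj (\<lambda>I. diag (flip_signs I))"
  using inj_compose[OF inj_diag inj_flip_signs] by (simp add: comp_def)

lemma matrix_inv_involution:
  fixes A :: "'a::comm_ring_1^'n^'n"
  assumes "A ** A = mat 1"
  shows "matrix_inv A = A"
proof -
  have "A ** matrix_inv A = mat 1 \<and> matrix_inv A ** A = mat 1"
    unfolding matrix_inv_def by (rule someI[of _ A]) (simp add: assms)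
  then have "A ** (A ** matrix_inv A) = A" by simp
  then show ?thesis by (simp add: matrix_mul_assoc assms)
qed

lemma diag_flip_signs_involution: "diag (flip_signs I) ** diag (flip_signs I) = mat 1"
  by (simp add: diag_conj[of _ "mat 1", simplified] flip_signs_def mat_def vec_eq_iff)

lemma diag_flip_signs_empty: "diag (flip_signs {}) = mat 1"
  by (simp add: diag_def flip_signs_def mat_def vec_eq_iff)

lemma diag_flip_signs_fixes_iff: "diag (flip_signs I) *v x = x \<longleftrightarrow> (\<forall>k\<in>I. x$k = 0)"
  by (auto simp: diag_mult_vec flip_signs_def vec_eq_iff)

lemma diag_flip_signs_commutes_iff:
  "diag (flip_signs I) ** A ** diag (flip_signs I) = A \<longleftrightarrow> block_diagonal I A"
  by (auto simp: diag_conj flip_signs_def vec_eq_iff block_diagonal_def)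

lemma block_diagonal_Compl [simp]: "block_diagonal (- I) A = block_diagonal I A"
  unfolding block_diagonal_def by auto

lemma block_diagonal_uminus [simp]: "block_diagonal I (- A) = block_diagonal I A"
  unfolding block_diagonal_def by simp

lemma block_diagonal_trivial [simp]: "block_diagonal {} A" "block_diagonal UNIV A"
  unfolding block_diagonal_def by auto

lemma skew_entry: "transpose J = - J \<Longrightarrow> J$k$l = - J$l$k"
  by (drule arg_cong[of _ _ "\<lambda>A. A$l$k"]) (simp add: transpose_def)

lemma block_diagonal_pair_iff:
  assumes "transpose J = - J"
  shows "block_diagonal {i, j} J \<longleftrightarrow> (\<forall>k. k \<noteq> i \<and> k \<noteq> j \<longrightarrow> J$k$i = 0 \<and> J$k$j = 0)"
proof
  assume "block_diagonal {i, j} J"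
  then show "\<forall>k. k \<noteq> i \<and> k \<noteq> j \<longrightarrow> J$k$i = 0 \<and> J$k$j = 0"
    unfolding block_diagonal_def by auto
next
  assume off: "\<forall>k. k \<noteq> i \<and> k \<noteq> j \<longrightarrow> J$k$i = 0 \<and> J$k$j = 0"
  show "block_diagonal {i, j} J"
    unfolding block_diagonal_def
  proof (intro allI impI)
    fix k l assume "(k \<in> {i, j}) \<noteq> (l \<in> {i, j})"
    then consider "k \<notin> {i, j}" "l \<in> {i, j}" | "l \<notin> {i, j}" "k \<in> {i, j}" by blast
    then show "J$k$l = 0"
    proof cases
      case 1 then show ?thesis using off by auto
    next
      case 2 then have "J$l$k = 0" using off by auto
      then show ?thesis using skew_entry[OF assms, of k l] by simp
    qed
  qed
qed

lemma skew_complex_structure_row_norm: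
  fixes J :: "real^'n^'n"
  assumes "transpose J = - J" "J ** J = - mat 1"
  shows "(\<Sum>k\<in>UNIV. (J$i$k)\<^sup>2) = 1"
proof -
  have "(\<Sum>k\<in>UNIV. J$i$k * J$k$i) = -1"
    using arg_cong[OF assms(2), of "\<lambda>A. A$i$i"] by (simp add: matrix_matrix_mult_def mat_def)
  then show ?thesis
    by (simp add: skew_entry[OF assms(1), of _ i] power2_eq_square sum_negf)
qed

lemma span_axes:
  assumes "i \<noteq> j"
  shows "x \<in> span {axis i 1, axis j 1} \<longleftrightarrow> (\<forall>k. k \<noteq> i \<and> k \<noteq> j \<longrightarrow> x$k = (0::real))"
proof
  assume "x \<in> span {axis i 1, axis j 1}"
  then obtain a b where "x - a *\<^sub>R axis i 1 = b *\<^sub>R axis j 1"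
    by (auto simp: span_breakdown_eq span_singleton)
  then have "x = a *\<^sub>R axis i 1 + b *\<^sub>R axis j 1" by (simp add: algebra_simps)
  then show "\<forall>k. k \<noteq> i \<and> k \<noteq> j \<longrightarrow> x$k = 0" by (simp add: axis_def)
next
  assume "\<forall>k. k \<noteq> i \<and> k \<noteq> j \<longrightarrow> x$k = 0"
  then have "x - (x$i) *\<^sub>R axis i 1 = (x$j) *\<^sub>R axis j 1"
    using assms by (auto simp: vec_eq_iff axis_def)
  then show "x \<in> span {axis i 1, axis j 1}"
    by (auto simp: span_breakdown_eq span_singleton)
qed

lemma card_Compl: "card (- (A :: 'a::finite set)) = CARD('a) - card A"
  by (simp add: Compl_eq_Diff_UNIV card_Diff_subset)

lemma two_subsets_4_containing_1:
  fixes I :: "4 set"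
  assumes "card I = 2" "1 \<in> I"
  shows "I = {1,2} \<or> I = {1,3} \<or> I = {1,4}"
proof -
  obtain a b where ab: "I = {a, b}" "a \<noteq> b"
    using assms(1) unfolding card_2_iff by blast
  obtain c where c: "I = {1, c}" "c \<noteq> 1"
  proof (cases "a = 1")
    case True then show ?thesis using ab that by blast
  next
    case False
    then have "b = 1" using ab assms(2) by blast
    then show ?thesis using ab that[of a] by (simp add: insert_commute)
  qed
  have "c = 2 \<or> c = 3 \<or> c = 4"
    using c(2) exhaust_4[of c] by blast
  with c(1) show ?thesis by blast
qed

lemma even_card_4_cases:
  fixes I :: "4 set"
  assumes "even (card I)"
  obtains "I = {}" | "I = UNIV" | "card I = 2"
proof -
  have "card I \<le> 4" using card_mono[of UNIV I] by simp
  with assms have "card I = 0 \<or> card I = 2 \<or> card I = 4" by presburger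
  then show ?thesis using that card_subset_eq[of UNIV I] by auto
qed

lemma even_subsets_4:
  "{I :: 4 set. even (card I)} = {{}, UNIV, {1,2}, -{1,2}, {1,3}, -{1,3}, {1,4}, -{1,4}}"
proof (intro equalityI subsetI)
  fix I :: "4 set" assume "I \<in> {I. even (card I)}"
  then have "even (card I)" by simp
  then show "I \<in> {{}, UNIV, {1,2}, -{1,2}, {1,3}, -{1,3}, {1,4}, -{1,4}}"
  proof (cases rule: even_card_4_cases)
    case 3
    show ?thesis
    proof (cases "1 \<in> I")
      case True
      then show ?thesis using two_subsets_4_containing_1[OF 3 True] by (elim disjE) simp_all
    next
      case False
      then have "- I = {1,2} \<or> - I = {1,3} \<or> - I = {1,4}"
        using 3 by (intro two_subsets_4_containing_1) (simp_all add: card_Compl)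
      then have "I = -{1,2} \<or> I = -{1,3} \<or> I = -{1,4}" by (metis double_compl)
      then show ?thesis by (elim disjE) simp_all
    qed
  qed simp_all
next
  fix I :: "4 set" assume "I \<in> {{}, UNIV, {1,2}, -{1,2}, {1,3}, -{1,3}, {1,4}, -{1,4}}"
  then show "I \<in> {I. even (card I)}"
    by (elim insertE emptyE) (simp_all add: card_Compl)
qed

lemma nonempty_even_subsets_4:
  fixes I :: "4 set"
  shows "even (card I) \<and> I \<noteq> {} \<longleftrightarrow> I = UNIV \<or> (\<exists>i j. i \<noteq> j \<and> I = - {i, j})"
proof
  assume I: "even (card I) \<and> I \<noteq> {}"
  show "I = UNIV \<or> (\<exists>i j. i \<noteq> j \<and> I = - {i, j})"
  proof (cases "I = UNIV")
    case False
    with I have "card I = 2" using even_card_4_cases[of I] by blast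
    then have "card (- I) = 2" by (simp add: card_Compl)
    then obtain i j where "- I = {i, j}" "i \<noteq> j" unfolding card_2_iff by blast
    then show ?thesis by (metis double_compl)
  qed simp
next
  assume "I = UNIV \<or> (\<exists>i j. i \<noteq> j \<and> I = - {i, j})"
  then show "even (card I) \<and> I \<noteq> {}"
  proof
    assume "\<exists>i j. i \<noteq> j \<and> I = - {i, j}"
    then obtain i j where "i \<noteq> j" "I = - {i, j}" by blast
    then have "card I = 2" by (simp add: card_Compl)
    then show ?thesis by auto
  qed simp
qed

section \<open>The sign group and its stabilisers\<close>

lemma flip_signs_of_sign_vector:
  assumes "\<forall>i. s i = 1 \<or> s i = -1" shows "flip_signs {i. s i = -1} = s"
proof
  fix i show "flip_signs {i. s i = -1} i = s i"
    using assms[rule_format, of i] by (auto simp: flip_signs_def)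
qed

lemma flip_signs_eq_neg_one: "{i. flip_signs I i = -1} = I"
  by (simp add: flip_signs_def)

lemma sign_group_eq: "sign_group = (\<lambda>I. diag (flip_signs I)) ` {I. even (card I)}"
proof -
  have "sign_group = {diag s | s. (\<forall>i. s i = 1 \<or> s i = -1) \<and> even (card {i. s i = -1})}"
    unfolding sign_group_def diag_def by blast
  also have "\<dots> = (\<lambda>I. diag (flip_signs I)) ` {I. even (card I)}"
  proof (intro equalityI subsetI)
    fix D assume "D \<in> {diag s | s. (\<forall>i. s i = 1 \<or> s i = -1) \<and> even (card {i. s i = -1})}"
    then obtain s where "\<forall>i. s i = 1 \<or> s i = -1" "even (card {i. s i = -1})" "D = diag s"
      by blast
    then show "D \<in> (\<lambda>I. diag (flip_signs I)) ` {I. even (card I)}"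
      by (intro image_eqI[of _ _ "{i. s i = -1}"]) (simp_all add: flip_signs_of_sign_vector)
  next
    fix D assume "D \<in> (\<lambda>I. diag (flip_signs I)) ` {I. even (card I)}"
    then obtain I where "even (card I)" "D = diag (flip_signs I)" by blast
    moreover have "\<forall>i. flip_signs I i = 1 \<or> flip_signs I i = -1"
      by (simp add: flip_signs_def)
    ultimately show "D \<in> {diag s | s. (\<forall>i. s i = 1 \<or> s i = -1) \<and> even (card {i. s i = -1})}"
      by (auto simp: flip_signs_eq_neg_one)
  qed
  finally show ?thesis .
qed

lemma stabilizer_eq:
  "stabilizer (q, J) = (\<lambda>I. diag (flip_signs I)) `
     {I. even (card I) \<and> (\<forall>k\<in>I. q$k = 0) \<and> block_diagonal I J}"
  by (auto simp: stabilizer_def sign_group_eq twistor_act_def matrix_inv_involution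
      diag_flip_signs_involution diag_flip_signs_fixes_iff diag_flip_signs_commutes_iff)

lemma mat_1_in_stabilizer: "mat 1 \<in> stabilizer z"
proof (cases z)
  case (Pair q J)
  have "{} \<in> {I :: 4 set. even (card I) \<and> (\<forall>k\<in>I. q$k = 0) \<and> block_diagonal I J}"
    by simp
  then show ?thesis
    unfolding Pair stabilizer_eq diag_flip_signs_empty[symmetric] by (rule imageI)
qed

lemma card_stabilizer_nontrivial:
  assumes "stabilizer z \<noteq> {mat 1}"
  shows "card (stabilizer z) \<noteq> 1"
proof
  assume "card (stabilizer z) = 1"
  then obtain D where "stabilizer z = {D}" by (rule card_1_singletonE)
  moreover have "mat 1 \<in> stabilizer z"
    by (rule mat_1_in_stabilizer)
  ultimately show False using assms by simp
qed

lemma card_stabilizer: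
  "card (stabilizer (q, J)) = 1 + of_bool (q = 0)
     + of_bool (block_diagonal {1,2} J \<and> q$1 = 0 \<and> q$2 = 0) + of_bool (block_diagonal {1,2} J \<and> q$3 = 0 \<and> q$4 = 0)
     + of_bool (block_diagonal {1,3} J \<and> q$1 = 0 \<and> q$3 = 0) + of_bool (block_diagonal {1,3} J \<and> q$2 = 0 \<and> q$4 = 0)
     + of_bool (block_diagonal {1,4} J \<and> q$1 = 0 \<and> q$4 = 0) + of_bool (block_diagonal {1,4} J \<and> q$2 = 0 \<and> q$3 = 0)"
proof -
  let ?P = "\<lambda>I. (\<forall>k\<in>I. q$k = 0) \<and> block_diagonal I J"
  let ?L = "[{}, UNIV, {1,2}, -{1,2}, {1,3}, -{1,3}, {1,4}, -{1,4::4}]"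
  have "card (stabilizer (q, J)) = card {I. even (card I) \<and> ?P I}"
    unfolding stabilizer_eq by (rule card_image) (rule inj_on_subset[OF inj_diag_flip_signs], simp)
  also have "\<dots> = (\<Sum>I\<in>{I. even (card I)}. of_bool (?P I))"
    by (simp add: sum.inter_filter[symmetric] Collect_conj_eq Int_commute)
  also have "\<dots> = (\<Sum>I\<leftarrow>?L. of_bool (?P I))"
  proof -
    have "distinct ?L"
      by (simp add: set_eq_iff forall_4)
    from sum.distinct_set_conv_list[OF this, of "\<lambda>I. of_bool (?P I)"]
    show ?thesis unfolding even_subsets_4 by (simp only: list.set)
  qed
  finally show ?thesis
    by (simp add: Ball_def forall_4 vec_eq_iff conj_ac)
qed

lemma stabilizer_nontrivial_iff:
  "stabilizer (q, J) \<noteq> {mat 1} \<longleftrightarrow>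
     q = 0 \<or> (\<exists>i j. i \<noteq> j \<and> (\<forall>k. k \<noteq> i \<and> k \<noteq> j \<longrightarrow> q$k = 0) \<and> block_diagonal {i, j} J)"
proof -
  let ?P = "\<lambda>I. (\<forall>k\<in>I. q$k = 0) \<and> block_diagonal I J"
  have "{mat 1} = (\<lambda>I. diag (flip_signs I)) ` {{} :: 4 set}"
    by (simp add: diag_flip_signs_empty)
  then have "stabilizer (q, J) = {mat 1} \<longleftrightarrow> {I. even (card I) \<and> ?P I} = {{}}"
    unfolding stabilizer_eq by (simp only: inj_image_eq_iff[OF inj_diag_flip_signs])
  then have "stabilizer (q, J) \<noteq> {mat 1} \<longleftrightarrow> (\<exists>I. (even (card I) \<and> I \<noteq> {}) \<and> ?P I)"
    by auto
  also have "\<dots> \<longleftrightarrow> ?P UNIV \<or> (\<exists>i j. i \<noteq> j \<and> ?P (- {i, j}))"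
    unfolding nonempty_even_subsets_4 by blast
  also have "?P UNIV \<longleftrightarrow> q = 0"
    by (simp add: vec_eq_iff)
  also have "(\<exists>i j. i \<noteq> j \<and> ?P (- {i, j})) \<longleftrightarrow>
      (\<exists>i j. i \<noteq> j \<and> (\<forall>k. k \<noteq> i \<and> k \<noteq> j \<longrightarrow> q$k = 0) \<and> block_diagonal {i, j} J)"
    by (simp add: Ball_def)
  finally show ?thesis .
qed

lemma orbit_origin:
  "orbit (0, J) = (\<lambda>I. (0, diag (flip_signs I) ** J ** diag (flip_signs I))) ` {I. even (card I)}"
proof -
  have "orbit (0, J) = (\<lambda>I. twistor_act (diag (flip_signs I)) (0, J)) ` {I. even (card I)}"
    unfolding orbit_def sign_group_eq by auto
  also have "\<dots> = (\<lambda>I. (0, diag (flip_signs I) ** J ** diag (flip_signs I))) ` {I. even (card I)}"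
    by (rule image_cong)
      (simp_all add: twistor_act_def matrix_inv_involution diag_flip_signs_involution diag_mult_vec vec_eq_iff)
  finally show ?thesis .
qed

section \<open>Skew-symmetric 4 by 4 matrices and orientation\<close>

lemma det_4:
  "det (A::'a::comm_ring_1^4^4) =
      A$1$1 * A$2$2 * A$3$3 * A$4$4 + A$1$1 * A$2$3 * A$3$4 * A$4$2 + A$1$1 * A$2$4 * A$3$2 * A$4$3 +
      A$1$2 * A$2$1 * A$3$4 * A$4$3 + A$1$2 * A$2$3 * A$3$1 * A$4$4 + A$1$2 * A$2$4 * A$3$3 * A$4$1 +
      A$1$3 * A$2$1 * A$3$2 * A$4$4 + A$1$3 * A$2$2 * A$3$4 * A$4$1 + A$1$3 * A$2$4 * A$3$1 * A$4$2 +
      A$1$4 * A$2$1 * A$3$3 * A$4$2 + A$1$4 * A$2$2 * A$3$1 * A$4$3 + A$1$4 * A$2$3 * A$3$2 * A$4$1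
      - (A$1$1 * A$2$2 * A$3$4 * A$4$3 + A$1$1 * A$2$3 * A$3$2 * A$4$4 + A$1$1 * A$2$4 * A$3$3 * A$4$2 +
         A$1$2 * A$2$1 * A$3$3 * A$4$4 + A$1$2 * A$2$3 * A$3$4 * A$4$1 + A$1$2 * A$2$4 * A$3$1 * A$4$3 +
         A$1$3 * A$2$1 * A$3$4 * A$4$2 + A$1$3 * A$2$2 * A$3$1 * A$4$4 + A$1$3 * A$2$4 * A$3$2 * A$4$1 +
         A$1$4 * A$2$1 * A$3$2 * A$4$3 + A$1$4 * A$2$2 * A$3$3 * A$4$1 + A$1$4 * A$2$3 * A$3$1 * A$4$2)"
proof -
  have insert_1: "finite {2::4, 3, 4}" "1 \<notin> {2::4, 3, 4}" by auto
  have insert_2: "finite {3::4, 4}" "2 \<notin> {3::4, 4}" by auto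
  have insert_3: "finite {4::4}" "3 \<notin> {4::4}" by auto
  show ?thesis
    unfolding det_def UNIV_4
    unfolding sum_over_permutations_insert[OF insert_1]
    unfolding sum_over_permutations_insert[OF insert_2]
    unfolding sum_over_permutations_insert[OF insert_3]
    unfolding permutes_sing
    by (simp add: sign_swap_id permutation_swap_id sign_compose permutation_compose sign_id swap_id_eq algebra_simps)
qed

lemma cols4_nth: "cols4 a b c d $ i $ j = (if j = 1 then a else if j = 2 then b else if j = 3 then c else d) $ i"
  unfolding cols4_def by simp

definition skew4 :: "real \<Rightarrow> real \<Rightarrow> real \<Rightarrow> real \<Rightarrow> real \<Rightarrow> real \<Rightarrow> real^4^4" where
  "skew4 a b c d e f = (\<chi> i j.
     if i = 1 then (if j = 2 then a else if j = 3 then b else if j = 4 then c else 0)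
     else if i = 2 then (if j = 1 then -a else if j = 3 then d else if j = 4 then e else 0)
     else if i = 3 then (if j = 1 then -b else if j = 2 then -d else if j = 4 then f else 0)
     else (if j = 1 then -c else if j = 2 then -e else if j = 3 then -f else 0))"

lemma skew4_uminus: "- skew4 a b c d e f = skew4 (-a) (-b) (-c) (-d) (-e) (-f)"
  unfolding skew4_def by (simp add: vec_eq_iff forall_4)

lemma skew4_eq_iff: "skew4 a b c d e f = skew4 a' b' c' d' e' f' \<longleftrightarrow>
   a = a' \<and> b = b' \<and> c = c' \<and> d = d' \<and> e = e' \<and> f = f'"
  unfolding skew4_def by (auto simp: vec_eq_iff forall_4)

lemma skew4_mult_vec: "skew4 a b c d e f *v v =
   (\<chi> i. if i = 1 then a * v$2 + b * v$3 + c * v$4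
         else if i = 2 then -a * v$1 + d * v$3 + e * v$4
         else if i = 3 then -b * v$1 - d * v$2 + f * v$4
         else -c * v$1 - e * v$2 - f * v$3)"
  unfolding skew4_def by (simp add: vec_eq_iff forall_4 matrix_vector_mult_def sum_4)

lemma skew4_entries:
  assumes "transpose J = - J"
  shows "J = skew4 (J$1$2) (J$1$3) (J$1$4) (J$2$3) (J$2$4) (J$3$4)"
proof -
  have diagonal: "J$k$k = 0" for k
    using skew_entry[OF assms, of k k] by simp
  have lower: "J$2$1 = - J$1$2" "J$3$1 = - J$1$3" "J$4$1 = - J$1$4"
      "J$3$2 = - J$2$3" "J$4$2 = - J$2$4" "J$4$3 = - J$3$4"
    by (rule skew_entry[OF assms])+
  show ?thesis unfolding skew4_def by (simp add: vec_eq_iff forall_4 diagonal lower)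
qed

lemma diag_conj_skew4: "diag s ** skew4 a b c d e f ** diag s =
  skew4 (s 1 * a * s 2) (s 1 * b * s 3) (s 1 * c * s 4) (s 2 * d * s 3) (s 2 * e * s 4) (s 3 * f * s 4)"
  by (simp add: diag_conj skew4_def vec_eq_iff forall_4)

lemma block_diagonal_skew4:
  "block_diagonal {1,2} (skew4 a b c d e f) \<longleftrightarrow> b = 0 \<and> c = 0 \<and> d = 0 \<and> e = 0"
  "block_diagonal {1,3} (skew4 a b c d e f) \<longleftrightarrow> a = 0 \<and> c = 0 \<and> d = 0 \<and> f = 0"
  "block_diagonal {1,4} (skew4 a b c d e f) \<longleftrightarrow> a = 0 \<and> b = 0 \<and> e = 0 \<and> f = 0"
  by (auto simp: block_diagonal_def skew4_def forall_4)

lemma reversed_block_structures_not_oriented: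
  "\<not> induces_orientation (skew4 x 0 0 0 0 (-x))"
  "\<not> induces_orientation (skew4 0 x 0 0 x 0)"
  "\<not> induces_orientation (skew4 0 0 x (-x) 0 0)"
proof -
  have "det (cols4 v (skew4 x 0 0 0 0 (-x) *v v) w (skew4 x 0 0 0 0 (-x) *v w)) =
      - x\<^sup>2 * ((v$2*w$3 - v$1*w$4 - v$3*w$2 + v$4*w$1)\<^sup>2 + (v$2*w$4 + v$1*w$3 - v$3*w$1 - v$4*w$2)\<^sup>2)"
    for v w by (simp add: det_4 cols4_nth skew4_mult_vec power2_eq_square algebra_simps)
  moreover have "det (cols4 v (skew4 0 x 0 0 x 0 *v v) w (skew4 0 x 0 0 x 0 *v w)) =
      - x\<^sup>2 * ((v$3*w$4 - v$1*w$2 - v$4*w$3 + v$2*w$1)\<^sup>2 + (v$3*w$2 + v$1*w$4 - v$4*w$1 - v$2*w$3)\<^sup>2)"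
    for v w by (simp add: det_4 cols4_nth skew4_mult_vec power2_eq_square algebra_simps)
  moreover have "det (cols4 v (skew4 0 0 x (-x) 0 0 *v v) w (skew4 0 0 x (-x) 0 0 *v w)) =
      - x\<^sup>2 * ((v$4*w$2 - v$1*w$3 - v$2*w$4 + v$3*w$1)\<^sup>2 + (v$4*w$3 + v$1*w$2 - v$2*w$1 - v$3*w$4)\<^sup>2)"
    for v w by (simp add: det_4 cols4_nth skew4_mult_vec power2_eq_square algebra_simps)
  ultimately show
    "\<not> induces_orientation (skew4 x 0 0 0 0 (-x))"
    "\<not> induces_orientation (skew4 0 x 0 0 x 0)"
    "\<not> induces_orientation (skew4 0 0 x (-x) 0 0)"
    unfolding induces_orientation_def by (simp_all add: not_less)
qed

section \<open>Orthogonal complex structures and stabilisers of order four\<close>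

lemma twistor_space_structure:
  assumes "(q, J) \<in> twistor_space"
  shows "J ** J = - mat 1" "transpose J = - J" "induces_orientation J"
proof -
  have q: "norm q < 1" and t: "twistor_at q J"
    using assms unfolding twistor_space_def hyp_ball_def by auto
  show JJ: "J ** J = - mat 1" and "induces_orientation J"
    using t unfolding twistor_at_def by auto
  have "(norm q)\<^sup>2 < 1" using q by (simp add: power_less_one_iff abs_less_iff)
  then have "4 / (1 - (norm q)\<^sup>2)\<^sup>2 \<noteq> (0::real)" by simp
  then have "(J *v u) \<bullet> (J *v v) = u \<bullet> v" for u v
    using t unfolding twistor_at_def hyp_metric_def by auto
  then have "orthogonal_matrix J"
    using orthogonal_transformation_matrix[of "(*v) J"]
    by (simp add: orthogonal_transformation_def matrix_vector_mul_linear)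
  then have TJ: "transpose J ** J = mat 1"
    unfolding orthogonal_matrix_def by simp
  have neg: "A ** (- B) = - (A ** B)" for A B :: "real^4^4"
    by (simp add: vec_eq_iff matrix_matrix_mult_def sum_negf)
  have "transpose J = transpose J ** (J ** (- J))"
    by (simp add: neg JJ)
  also have "\<dots> = - J"
    by (simp add: matrix_mul_assoc TJ neg)
  finally show "transpose J = - J" .
qed

lemma twistor_space_uminus: "(q, - J) \<in> twistor_space \<longleftrightarrow> (q, J) \<in> twistor_space"
proof -
  have "(- J) *v v = - (J *v v)" for v :: "real^4"
    by (simp add: vec_eq_iff matrix_vector_mult_def sum_negf)
  moreover have "(- J) ** (- J) = J ** J"
    by (simp add: vec_eq_iff matrix_matrix_mult_def)
  moreover have "det (cols4 v (- a) w (- b)) = det (cols4 v a w b)" for v a w b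
    by (simp add: det_4 cols4_nth)
  ultimately show ?thesis
    by (simp add: twistor_space_def twistor_at_def hyp_metric_def induces_orientation_def)
qed

lemma twistor_space_origin:
  assumes "J ** J = - mat 1" "\<And>u v. (J *v u) \<bullet> (J *v v) = u \<bullet> v" "induces_orientation J"
  shows "(0, J) \<in> twistor_space"
  using assms unfolding twistor_space_def hyp_ball_def twistor_at_def hyp_metric_def by simp

lemma twistor_space_skew4:
  assumes "(q, J) \<in> twistor_space"
  obtains a b c d e f where "J = skew4 a b c d e f"
    "a\<^sup>2 + b\<^sup>2 + c\<^sup>2 = 1" "a\<^sup>2 + d\<^sup>2 + e\<^sup>2 = 1" "b\<^sup>2 + d\<^sup>2 + f\<^sup>2 = 1" "c\<^sup>2 + e\<^sup>2 + f\<^sup>2 = 1"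
proof -
  note J = twistor_space_structure[OF assms]
  obtain a b c d e f where skew: "J = skew4 a b c d e f"
    using skew4_entries[OF J(2)] by blast
  have "(\<Sum>k\<in>UNIV. (skew4 a b c d e f $ i $ k)\<^sup>2) = 1" for i
    using skew_complex_structure_row_norm[OF J(2,1)] skew by simp
  from this[of 1] this[of 2] this[of 3] this[of 4] show ?thesis
    by (intro that[OF skew]) (simp_all add: skew4_def sum_4 algebra_simps)
qed

text \<open>Left multiplication by \<open>i\<close>, \<open>j\<close>, \<open>k\<close> on the quaternions, in the basis \<open>1, i, j, k\<close>.\<close>

definition quat_i :: "real^4^4" where "quat_i = skew4 (-1) 0 0 0 0 (-1)"
definition quat_j :: "real^4^4" where "quat_j = skew4 0 (-1) 0 0 1 0"
definition quat_k :: "real^4^4" where "quat_k = skew4 0 0 (-1) (-1) 0 0"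

lemmas quat_defs = quat_i_def quat_j_def quat_k_def

lemma quat_induces_orientation:
  "induces_orientation quat_i" "induces_orientation quat_j" "induces_orientation quat_k"
proof -
  show "induces_orientation quat_i"
    unfolding induces_orientation_def quat_defs
    by (rule exI[of _ "axis 1 1"], rule exI[of _ "axis 3 1"]) (simp add: det_4 cols4_nth skew4_mult_vec axis_def)
  show "induces_orientation quat_j"
    unfolding induces_orientation_def quat_defs
    by (rule exI[of _ "axis 1 1"], rule exI[of _ "axis 4 1"]) (simp add: det_4 cols4_nth skew4_mult_vec axis_def)
  show "induces_orientation quat_k"
    unfolding induces_orientation_def quat_defs
    by (rule exI[of _ "axis 1 1"], rule exI[of _ "axis 2 1"]) (simp add: det_4 cols4_nth skew4_mult_vec axis_def)
qed

lemma quat_in_twistor_space: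
  "(0, quat_i) \<in> twistor_space" "(0, quat_j) \<in> twistor_space" "(0, quat_k) \<in> twistor_space"
proof -
  have square: "quat_i ** quat_i = - mat 1" "quat_j ** quat_j = - mat 1" "quat_k ** quat_k = - mat 1"
    by (simp_all add: quat_defs skew4_def vec_eq_iff forall_4 matrix_matrix_mult_def sum_4 mat_def)
  have isometric: "(quat_i *v u) \<bullet> (quat_i *v v) = u \<bullet> v" "(quat_j *v u) \<bullet> (quat_j *v v) = u \<bullet> v"
      "(quat_k *v u) \<bullet> (quat_k *v v) = u \<bullet> v" for u v
    by (simp_all add: quat_defs skew4_mult_vec inner_vec_def sum_4 algebra_simps)
  show "(0, quat_i) \<in> twistor_space" "(0, quat_j) \<in> twistor_space" "(0, quat_k) \<in> twistor_space"
    by (rule twistor_space_origin[OF square(1) isometric(1) quat_induces_orientation(1)]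
        twistor_space_origin[OF square(2) isometric(2) quat_induces_orientation(2)]
        twistor_space_origin[OF square(3) isometric(3) quat_induces_orientation(3)])+
qed

lemma twistor_space_block_diagonal:
  assumes "(q, J) \<in> twistor_space"
  shows "block_diagonal {1,2} J \<Longrightarrow> J = quat_i \<or> J = - quat_i"
    "block_diagonal {1,3} J \<Longrightarrow> J = quat_j \<or> J = - quat_j"
    "block_diagonal {1,4} J \<Longrightarrow> J = quat_k \<or> J = - quat_k"
proof -
  obtain a b c d e f where J: "J = skew4 a b c d e f"
    and rows: "a\<^sup>2 + b\<^sup>2 + c\<^sup>2 = 1" "a\<^sup>2 + d\<^sup>2 + e\<^sup>2 = 1" "b\<^sup>2 + d\<^sup>2 + f\<^sup>2 = 1" "c\<^sup>2 + e\<^sup>2 + f\<^sup>2 = 1"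
    using twistor_space_skew4[OF assms] by blast
  have oriented: "induces_orientation (skew4 a b c d e f)"
    using twistor_space_structure(3)[OF assms] J by simp
  show "J = quat_i \<or> J = - quat_i" if "block_diagonal {1,2} J"
  proof -
    have "b = 0" "c = 0" "d = 0" "e = 0" "a\<^sup>2 = 1" "f\<^sup>2 = 1"
      using that rows unfolding J block_diagonal_skew4 by auto
    moreover have "f \<noteq> - a"
      using oriented reversed_block_structures_not_oriented(1)[of a] \<open>b = 0\<close> \<open>c = 0\<close> \<open>d = 0\<close> \<open>e = 0\<close> by auto
    ultimately show ?thesis
      unfolding J quat_defs skew4_uminus skew4_eq_iff by (auto simp: power2_eq_1_iff)
  qed
  show "J = quat_j \<or> J = - quat_j" if "block_diagonal {1,3} J"
  proof -
    have "a = 0" "c = 0" "d = 0" "f = 0" "b\<^sup>2 = 1" "e\<^sup>2 = 1"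
      using that rows unfolding J block_diagonal_skew4 by auto
    moreover have "e \<noteq> b"
      using oriented reversed_block_structures_not_oriented(2)[of b] \<open>a = 0\<close> \<open>c = 0\<close> \<open>d = 0\<close> \<open>f = 0\<close> by auto
    ultimately show ?thesis
      unfolding J quat_defs skew4_uminus skew4_eq_iff by (auto simp: power2_eq_1_iff)
  qed
  show "J = quat_k \<or> J = - quat_k" if "block_diagonal {1,4} J"
  proof -
    have "a = 0" "b = 0" "e = 0" "f = 0" "c\<^sup>2 = 1" "d\<^sup>2 = 1"
      using that rows unfolding J block_diagonal_skew4 by auto
    moreover have "d \<noteq> - c"
      using oriented reversed_block_structures_not_oriented(3)[of c] \<open>a = 0\<close> \<open>b = 0\<close> \<open>e = 0\<close> \<open>f = 0\<close> by auto
    ultimately show ?thesis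
      unfolding J quat_defs skew4_uminus skew4_eq_iff by (auto simp: power2_eq_1_iff)
  qed
qed

lemma twistor_space_unique_block:
  assumes "(q, J) \<in> twistor_space"
  shows "\<not> (block_diagonal {1,2} J \<and> block_diagonal {1,3} J)"
    "\<not> (block_diagonal {1,2} J \<and> block_diagonal {1,4} J)"
    "\<not> (block_diagonal {1,3} J \<and> block_diagonal {1,4} J)"
  using twistor_space_block_diagonal[OF assms]
  by (auto simp: quat_defs skew4_uminus skew4_eq_iff)

lemma twistor_space_card_stabilizer:
  assumes "(q, J) \<in> twistor_space"
  shows "card (stabilizer (q, J)) = 4 \<longleftrightarrow>
      q = 0 \<and> (block_diagonal {1,2} J \<or> block_diagonal {1,3} J \<or> block_diagonal {1,4} J)"
    "card (stabilizer (q, J)) \<in> {1, 2, 4}"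
  using twistor_space_unique_block[OF assms]
  unfolding card_stabilizer vec_eq_iff forall_4 by (auto simp: of_bool_def)

lemma orbit_quat:
  "orbit (0, quat_i) = {(0, quat_i), (0, - quat_i)}"
  "orbit (0, quat_j) = {(0, quat_j), (0, - quat_j)}"
  "orbit (0, quat_k) = {(0, quat_k), (0, - quat_k)}"
  unfolding orbit_origin even_subsets_4 quat_defs skew4_uminus diag_conj_skew4
  by (auto simp: flip_signs_def)

lemma stabilizer_order_4_points:
  "{z \<in> twistor_space. card (stabilizer z) = 4} =
     {(0, quat_i), (0, - quat_i), (0, quat_j), (0, - quat_j), (0, quat_k), (0, - quat_k)}"
proof (intro equalityI subsetI)
  fix z :: "(real^4) \<times> (real^4^4)" assume "z \<in> {z \<in> twistor_space. card (stabilizer z) = 4}"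
  then obtain q J where z: "z = (q, J)" "(q, J) \<in> twistor_space" "card (stabilizer (q, J)) = 4"
    by (cases z) auto
  then have "q = 0" "block_diagonal {1,2} J \<or> block_diagonal {1,3} J \<or> block_diagonal {1,4} J"
    using twistor_space_card_stabilizer(1)[OF z(2)] by auto
  then show "z \<in> {(0, quat_i), (0, - quat_i), (0, quat_j), (0, - quat_j), (0, quat_k), (0, - quat_k)}"
    using twistor_space_block_diagonal[OF z(2)] z(1) by auto
next
  fix z :: "(real^4) \<times> (real^4^4)" assume "z \<in> {(0, quat_i), (0, - quat_i), (0, quat_j), (0, - quat_j), (0, quat_k), (0, - quat_k)}"
  moreover have "block_diagonal {1,2} quat_i" "block_diagonal {1,3} quat_j" "block_diagonal {1,4} quat_k"
    by (simp_all add: quat_defs block_diagonal_skew4)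
  ultimately show "z \<in> {z \<in> twistor_space. card (stabilizer z) = 4}"
    using quat_in_twistor_space twistor_space_uminus twistor_space_card_stabilizer(1)
      block_diagonal_uminus by auto
qed

section \<open>The twelve lifted surfaces\<close>

lemma twistor_lift_axes_iff:
  assumes "i \<noteq> j"
  shows "(q, J) \<in> twistor_lift (axis i 1) (axis j 1) \<longleftrightarrow> (q, J) \<in> twistor_space \<and>
    (\<forall>k. k \<noteq> i \<and> k \<noteq> j \<longrightarrow> q$k = 0) \<and> block_diagonal {i, j} J \<and> J$j$i > 0"
proof (cases "(q, J) \<in> twistor_space")
  case True
  then show ?thesis
    unfolding twistor_lift_def geod_plane_def
    using span_axes[OF assms] block_diagonal_pair_iff[OF twistor_space_structure(2)[OF True]]
    by (auto simp: twistor_space_def geod_plane_def matrix_vector_mult_basis column_def inner_axis)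
qed (simp add: twistor_lift_def)

lemma twistor_space_block_pair_entry:
  assumes "(q, J) \<in> twistor_space" "i \<noteq> j" "block_diagonal {i, j} J"
  shows "J$j$i \<noteq> 0"
proof -
  note J = twistor_space_structure[OF assms(1)]
  have "J$j$k = 0" if "k \<noteq> i" for k
    using that assms(3) skew_entry[OF J(2), of j j] unfolding block_diagonal_def by (cases "k = j") auto
  then have "(\<Sum>k\<in>UNIV. (J$j$k)\<^sup>2) = (\<Sum>k\<in>UNIV. if k = i then (J$j$i)\<^sup>2 else 0)"
    by (intro sum.cong) auto
  then have "(J$j$i)\<^sup>2 = 1"
    using skew_complex_structure_row_norm[OF J(2,1), of j] by simp
  then show ?thesis by auto
qed

lemma twelve_surfaces_iff:
  "(q, J) \<in> twelve_surfaces \<longleftrightarrow> (q, J) \<in> twistor_space \<and>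
     (\<exists>i j. i \<noteq> j \<and> (\<forall>k. k \<noteq> i \<and> k \<noteq> j \<longrightarrow> q$k = 0) \<and> block_diagonal {i, j} J)"
proof
  assume "(q, J) \<in> twelve_surfaces"
  then obtain i j where "i \<noteq> j" "(q, J) \<in> twistor_lift (axis i 1) (axis j 1)"
    unfolding twelve_surfaces_def by (auto split: if_splits)
  then show "(q, J) \<in> twistor_space \<and>
     (\<exists>i j. i \<noteq> j \<and> (\<forall>k. k \<noteq> i \<and> k \<noteq> j \<longrightarrow> q$k = 0) \<and> block_diagonal {i, j} J)"
    using twistor_lift_axes_iff by blast
next
  assume "(q, J) \<in> twistor_space \<and>
     (\<exists>i j. i \<noteq> j \<and> (\<forall>k. k \<noteq> i \<and> k \<noteq> j \<longrightarrow> q$k = 0) \<and> block_diagonal {i, j} J)"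
  then obtain i j where ts: "(q, J) \<in> twistor_space" and ij: "i \<noteq> j"
    and q: "\<forall>k. k \<noteq> i \<and> k \<noteq> j \<longrightarrow> q$k = 0" and bd: "block_diagonal {i, j} J"
    by blast
  have sub: "twistor_lift (axis a 1) (axis b 1) \<subseteq> twelve_surfaces" if "a \<noteq> b" for a b
    unfolding twelve_surfaces_def
  proof
    fix z assume "z \<in> twistor_lift (axis a 1) (axis b 1)"
    then have "z \<in> (if a \<noteq> b then twistor_lift (axis a 1) (axis b 1) else {})"
      using that by simp
    then show "z \<in> (\<Union>i j. if i \<noteq> j then twistor_lift (axis i 1) (axis j 1) else {})"
      by blast
  qed
  have "J$j$i > 0 \<or> J$i$j > 0"
    using twistor_space_block_pair_entry[OF ts ij bd] skew_entry[OF twistor_space_structure(2)[OF ts], of i j]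
    by linarith
  then show "(q, J) \<in> twelve_surfaces"
  proof
    assume "J$j$i > 0"
    then have "(q, J) \<in> twistor_lift (axis i 1) (axis j 1)"
      using twistor_lift_axes_iff[OF ij] ts q bd by simp
    then show ?thesis using sub[OF ij] by blast
  next
    assume "J$i$j > 0"
    moreover have "block_diagonal {j, i} J" using bd by (simp add: insert_commute)
    ultimately have "(q, J) \<in> twistor_lift (axis j 1) (axis i 1)"
      using twistor_lift_axes_iff[OF ij[symmetric]] ts q by auto
    then show ?thesis using sub[OF ij[symmetric]] by blast
  qed
qed

lemma nontrivial_stabilizer_points:
  "twistor_fibre 0 \<union> twelve_surfaces = {z \<in> twistor_space. stabilizer z \<noteq> {mat 1}}"
proof (intro set_eqI)
  fix z :: "(real^4) \<times> (real^4^4)"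
  obtain q J where z: "z = (q, J)" by (cases z)
  show "z \<in> twistor_fibre 0 \<union> twelve_surfaces \<longleftrightarrow> z \<in> {z \<in> twistor_space. stabilizer z \<noteq> {mat 1}}"
    unfolding z using stabilizer_nontrivial_iff[of q J] twelve_surfaces_iff[of q J]
    by (auto simp: twistor_fibre_def twistor_proj_def)
qed

theorem lemma2p1:
  shows "(\<exists>J1 J2 J3.
            {z \<in> twistor_space. card (stabilizer z) = 4}
              = {(0, J1), (0, -J1), (0, J2), (0, -J2), (0, J3), (0, -J3)}
          \<and> card {(0::real^4, J1), (0, -J1), (0, J2), (0, -J2), (0, J3), (0, -J3)} = 6
          \<and> {(0::real^4, J1), (0, -J1), (0, J2), (0, -J2), (0, J3), (0, -J3)} \<subseteq> twistor_fibre 0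
          \<and> J1 \<bullet> J2 = 0 \<and> J1 \<bullet> J3 = 0 \<and> J2 \<bullet> J3 = 0
          \<and> orbit (0, J1) = {(0, J1), (0, -J1)}
          \<and> orbit (0, J2) = {(0, J2), (0, -J2)}
          \<and> orbit (0, J3) = {(0, J3), (0, -J3)})
       \<and> (\<forall>z \<in> twistor_space. stabilizer z \<noteq> {mat 1} \<and> card (stabilizer z) \<noteq> 4
            \<longrightarrow> card (stabilizer z) = 2)
       \<and> {z \<in> twistor_space. stabilizer z \<noteq> {mat 1} \<and> card (stabilizer z) \<noteq> 4}
           = (twistor_fibre 0 \<union> twelve_surfaces) - {z \<in> twistor_space. card (stabilizer z) = 4}"
proof (intro conjI exI)
  show "{z \<in> twistor_space. card (stabilizer z) = 4} =
      {(0, quat_i), (0, - quat_i), (0, quat_j), (0, - quat_j), (0, quat_k), (0, - quat_k)}"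
    by (rule stabilizer_order_4_points)
  show "card {(0::real^4, quat_i), (0, - quat_i), (0, quat_j), (0, - quat_j), (0, quat_k), (0, - quat_k)} = 6"
    by (simp add: quat_defs skew4_uminus skew4_eq_iff)
  show "{(0::real^4, quat_i), (0, - quat_i), (0, quat_j), (0, - quat_j), (0, quat_k), (0, - quat_k)}
      \<subseteq> twistor_fibre 0"
    using quat_in_twistor_space twistor_space_uminus by (simp add: twistor_fibre_def twistor_proj_def)
  show "quat_i \<bullet> quat_j = 0" "quat_i \<bullet> quat_k = 0" "quat_j \<bullet> quat_k = 0"
    by (simp_all add: quat_defs inner_vec_def sum_4 skew4_def)
  show "orbit (0, quat_i) = {(0, quat_i), (0, - quat_i)}" "orbit (0, quat_j) = {(0, quat_j), (0, - quat_j)}"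
    "orbit (0, quat_k) = {(0, quat_k), (0, - quat_k)}"
    by (rule orbit_quat)+
  show "\<forall>z \<in> twistor_space. stabilizer z \<noteq> {mat 1} \<and> card (stabilizer z) \<noteq> 4 \<longrightarrow> card (stabilizer z) = 2"
    using twistor_space_card_stabilizer(2) card_stabilizer_nontrivial by fastforce
  show "{z \<in> twistor_space. stabilizer z \<noteq> {mat 1} \<and> card (stabilizer z) \<noteq> 4}
      = (twistor_fibre 0 \<union> twelve_surfaces) - {z \<in> twistor_space. card (stabilizer z) = 4}"
    unfolding nontrivial_stabilizer_points by blast
qed

end
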